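(* There exists a constant $c>0$ (independent of $n$ and $m$) such that for every $n\ge3$, every $3\le m\le n$, $$\sup_{m-1\le n'\le n-1}\ \sup_{\mathbf{s}\in\mathcal{S}^n_0(m,n')}\tilde{\mathbb{E}}_{\mathbf{s}}\,\xi^{n'}(m)\le cm^2,$$ where $\xi^{n'}(m)=\inf\{t\ge0:X_{n'+1}(t)>0\}\wedge\inf\{t\ge0:X_{n'}(t)\ge(2e)^{-1}\}$.
   Context: The $n$-particle Stochastic Follow-the-Leader system $\mathbf{X}=(X_1,\dots,X_n)$ on $\mathbb{R}$, $X_n\le\dots\le X_1$, evolves as a pure jump Markov process: the leader $X_1$ jumps forward at rate $1$ with i.i.d. jump sizes of a law $\theta$ on $(0,\infty)$; for $i\ge2$, $X_i$ jumps at rate $X_{i-1}-X_i$ to a uniform location in $(X_i,X_{i-1})$. $\tilde{\mathbb{E}}_{\mathbf{s}}$ denotes expectation when $\mathbf{X}(0)=\mathbf{s}$. For $3\le m\le n$ and $m-1\le n'\le n-1$, $\mathcal{S}^n_0(m,n')=\{(x_1,\dots,x_n)\in\mathbb{R}^n:x_1\ge x_2\ge\dots\ge x_n,\ x_{n'+1}=0,\ x_{n'-m+2}\ge1\}$. *)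

theory Defs
  imports "HOL-Probability.Probability"
begin

text \<open>Stochastic Follow-the-Leader system with n particles, indexed 1..n
  (configurations are functions nat => real; only indices 1..n matter).
  The pure jump process is constructed canonically from an i.i.d. input
  sequence: at each step k we draw (u,v) uniform on [0,1]^2, an Exp(1)
  variable e and a leader jump size j with law theta.  The embedded jump
  chain chooses the jumping particle with probability proportional to its
  rate (u selects it), the holding time is e / (total rate), and the
  continuous-time path is piecewise constant and right-continuous.\<close>

definition sftl_rate :: "nat \<Rightarrow> (nat \<Rightarrow> real) \<Rightarrow> real" where
  "sftl_rate n x = 1 + (\<Sum>i\<in>{2..n}. x (i - 1) - x i)"

definition sftl_cum :: "nat \<Rightarrow> (nat \<Rightarrow> real) \<Rightarrow> nat \<Rightarrow> real" where
  "sftl_cum n x i = 1 + (\<Sum>j\<in>{2..i}. x (j - 1) - x j)"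

definition sftl_step :: "nat \<Rightarrow> (nat \<Rightarrow> real) \<Rightarrow> real \<Rightarrow> real \<Rightarrow> real \<Rightarrow> (nat \<Rightarrow> real)" where
  "sftl_step n x u v j =
    (let r = u * sftl_rate n x in
     if r < 1 then x(1 := x 1 + j)
     else if (\<exists>i\<in>{2..n}. r < sftl_cum n x i) then
       (let i = (LEAST i. 2 \<le> i \<and> i \<le> n \<and> r < sftl_cum n x i)
        in x(i := x i + v * (x (i - 1) - x i)))
     else x)"

type_synonym sftl_input = "(real \<times> real) \<times> (real \<times> real)"

definition sftl_input_measure :: "real measure \<Rightarrow> sftl_input measure" where
  "sftl_input_measure \<theta> =
     (uniform_measure lborel {0..1} \<Otimes>\<^sub>M uniform_measure lborel {0..1}) \<Otimes>\<^sub>M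
     (density lborel (exponential_density 1) \<Otimes>\<^sub>M \<theta>)"

definition sftl_space :: "real measure \<Rightarrow> (nat \<Rightarrow> sftl_input) measure" where
  "sftl_space \<theta> = PiM UNIV (\<lambda>_::nat. sftl_input_measure \<theta>)"

primrec sftl_chain :: "nat \<Rightarrow> (nat \<Rightarrow> real) \<Rightarrow> (nat \<Rightarrow> sftl_input) \<Rightarrow> nat \<Rightarrow> (nat \<Rightarrow> real)" where
  "sftl_chain n s \<omega> 0 = s"
| "sftl_chain n s \<omega> (Suc k) =
     sftl_step n (sftl_chain n s \<omega> k) (fst (fst (\<omega> k))) (snd (fst (\<omega> k))) (snd (snd (\<omega> k)))"

definition sftl_hold :: "nat \<Rightarrow> (nat \<Rightarrow> real) \<Rightarrow> (nat \<Rightarrow> sftl_input) \<Rightarrow> nat \<Rightarrow> real" where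
  "sftl_hold n s \<omega> k = fst (snd (\<omega> k)) / sftl_rate n (sftl_chain n s \<omega> k)"

definition sftl_jt :: "nat \<Rightarrow> (nat \<Rightarrow> real) \<Rightarrow> (nat \<Rightarrow> sftl_input) \<Rightarrow> nat \<Rightarrow> real" where
  "sftl_jt n s \<omega> k = (\<Sum>j<k. sftl_hold n s \<omega> j)"

text \<open>The continuous-time process X(t); None if t lies beyond all jump times
  (explosion, which has probability zero).\<close>
definition sftl_X :: "nat \<Rightarrow> (nat \<Rightarrow> real) \<Rightarrow> (nat \<Rightarrow> sftl_input) \<Rightarrow> real \<Rightarrow> (nat \<Rightarrow> real) option" where
  "sftl_X n s \<omega> t =
    (if \<exists>k. sftl_jt n s \<omega> k \<le> t \<and> t < sftl_jt n s \<omega> (Suc k)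
     then Some (sftl_chain n s \<omega> (LEAST k. sftl_jt n s \<omega> k \<le> t \<and> t < sftl_jt n s \<omega> (Suc k)))
     else None)"

text \<open>The stopping time xi^{n'}(m) (inf of the empty set is infinity).\<close>
definition sftl_xi :: "nat \<Rightarrow> nat \<Rightarrow> (nat \<Rightarrow> real) \<Rightarrow> (nat \<Rightarrow> sftl_input) \<Rightarrow> ennreal" where
  "sftl_xi n n' s \<omega> =
     min (INF t \<in> {t. 0 \<le> t \<and> (\<exists>x. sftl_X n s \<omega> t = Some x \<and> x (n' + 1) > 0)}. ennreal t)
         (INF t \<in> {t. 0 \<le> t \<and> (\<exists>x. sftl_X n s \<omega> t = Some x \<and> x n' \<ge> 1 / (2 * exp 1))}. ennreal t)"

definition sftl_E :: "real measure \<Rightarrow> nat \<Rightarrow> (nat \<Rightarrow> real) \<Rightarrow> ((nat \<Rightarrow> sftl_input) \<Rightarrow> ennreal) \<Rightarrow> ennreal" where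
  "sftl_E \<theta> n s f = (\<integral>\<^sup>+ \<omega>. f \<omega> \<partial>sftl_space \<theta>)"

text \<open>The set S^n_0(m,n') (vectors in R^n, represented with zero outside 1..n).\<close>
definition sftl_S :: "nat \<Rightarrow> nat \<Rightarrow> nat \<Rightarrow> (nat \<Rightarrow> real) set" where
  "sftl_S n m n' = {x. (\<forall>i. i \<notin> {1..n} \<longrightarrow> x i = 0) \<and>
       (\<forall>i\<in>{1..<n}. x (i + 1) \<le> x i) \<and> x (n' + 1) = 0 \<and> x (n' + 2 - m) \<ge> 1}"

end

theory Submission
  imports Defs
begin

text \<open>
  Write \<open>a = n' + 2 - m\<close> and let \<open>G(x)\<close> be the sum of \<open>min (x i) 1\<close> over the block
  \<open>a < i \<le> n'\<close>, so that \<open>0 \<le> G \<le> m - 2\<close>.  Before \<open>\<xi>\<close>, particle \<open>a\<close> sits at height at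
  least \<open>1\<close> and particle \<open>n'\<close> below \<open>1/(2e) \<le> 1/4\<close>, so the capped gaps
  \<open>min (x (i - 1)) 1 - min (x i) 1\<close> of the block add up to at least \<open>3/4\<close>.  The next jump is
  made by particle \<open>i\<close> with probability \<open>(x (i - 1) - x i)/R\<close>, \<open>R\<close> the total rate, and
  then raises \<open>G\<close> by at least a uniform fraction of the capped gap; by Cauchy--Schwarz the
  expected increase of \<open>G\<close> per jump is at least of order \<open>1/(m R)\<close>.  As the expected
  holding time is \<open>1/R\<close>, \<open>F = 22 m (m - G)\<close> is a Lyapunov function for the embedded chain:
  the expected cost of a step, which dominates its holding time, plus the expected value of
  \<open>F\<close> after it is at most \<open>F\<close> before it.  Summing over the steps before stopping bounds
  \<open>E \<xi>\<close> by \<open>F(s) \<le> 22 m\<^sup>2\<close>.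
\<close>

lemma sum_telescope_down:
  "m \<le> n \<Longrightarrow> (\<Sum>k\<in>{Suc m..n}. f (k - 1) - f k) = f m - (f n :: 'a :: ab_group_add)"
  using sum_telescope''[of m n "\<lambda>k. - f k"] by (simp add: algebra_simps)

lemma min_one_concave_step:
  fixes y z v :: real
  assumes "y \<le> z" "0 \<le> v" "v \<le> 1"
  shows "v * (min z 1 - min y 1) \<le> min (y + v * (z - y)) 1 - min y 1"
proof -
  define t where "t = v * (z - y)"
  have t0: "0 \<le> t" using assms by (simp add: t_def)
  have t1: "t \<le> z - y" using assms mult_left_le_one_le[of "z - y" v] by (simp add: t_def)
  have t2: "1 \<le> z \<Longrightarrow> v * (1 - y) \<le> t" using assms unfolding t_def by (intro mult_left_mono) auto
  have t3: "y \<le> 1 \<Longrightarrow> v * (1 - y) \<le> 1 - y" using assms mult_left_le_one_le[of "1 - y" v] by simp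
  have "v * (min z 1 - min y 1) = (if y \<ge> 1 then 0 else if z \<le> 1 then t else v * (1 - y))"
    using assms by (auto simp: t_def min_def)
  then show ?thesis unfolding t_def[symmetric] using t0 t1 t2 t3 by (auto simp: min_def)
qed

lemma square_sum_le_card_mult_sum:
  fixes a b :: "'i \<Rightarrow> real"
  assumes "\<And>i. i \<in> I \<Longrightarrow> 0 \<le> a i \<and> a i \<le> b i"
  shows "(\<Sum>i\<in>I. a i)\<^sup>2 \<le> card I * (\<Sum>i\<in>I. a i * b i)"
proof -
  have "(\<Sum>i\<in>I. 1 * a i)\<^sup>2 \<le> (\<Sum>i\<in>I. 1\<^sup>2) * (\<Sum>i\<in>I. (a i)\<^sup>2)"
    by (rule Cauchy_Schwarz_ineq_sum)
  also have "\<dots> = card I * (\<Sum>i\<in>I. (a i)\<^sup>2)"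
    by simp
  also have "\<dots> \<le> card I * (\<Sum>i\<in>I. a i * b i)"
    using assms by (intro mult_left_mono sum_mono) (auto simp: power2_eq_square intro: mult_left_mono)
  finally show ?thesis by simp
qed

lemma pair_prob_spaceI: "prob_space M \<Longrightarrow> prob_space N \<Longrightarrow> pair_prob_space M N"
  by (simp add: pair_prob_space_def pair_sigma_finite_def prob_space_imp_sigma_finite)

lemma nn_integral_fst_prob_pair:
  assumes "prob_space M" "prob_space N" "f \<in> borel_measurable M"
  shows "(\<integral>\<^sup>+z. f (fst z) \<partial>(M \<Otimes>\<^sub>M N)) = (\<integral>\<^sup>+x. f x \<partial>M)"
proof -
  interpret pair_prob_space M N using assms(1,2) by (rule pair_prob_spaceI)
  have "(\<integral>\<^sup>+z. f (fst z) \<partial>(M \<Otimes>\<^sub>M N)) = (\<integral>\<^sup>+x. \<integral>\<^sup>+y. f (fst (x, y)) \<partial>N \<partial>M)"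
    by (rule M2.nn_integral_fst[symmetric]) (use assms(3) in measurable)
  then show ?thesis by (simp add: M2.emeasure_space_1)
qed

lemma nn_integral_snd_prob_pair:
  assumes "prob_space M" "prob_space N" "f \<in> borel_measurable N"
  shows "(\<integral>\<^sup>+z. f (snd z) \<partial>(M \<Otimes>\<^sub>M N)) = (\<integral>\<^sup>+y. f y \<partial>N)"
proof -
  interpret pair_prob_space M N using assms(1,2) by (rule pair_prob_spaceI)
  have "(\<integral>\<^sup>+z. f (snd z) \<partial>(M \<Otimes>\<^sub>M N)) = (\<integral>\<^sup>+x. \<integral>\<^sup>+y. f (snd (x, y)) \<partial>N \<partial>M)"
    by (rule M2.nn_integral_fst[symmetric]) (use assms(3) in measurable)
  then show ?thesis by (simp add: M1.emeasure_space_1)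
qed

lemma nn_integral_prob_pair_mult:
  assumes "prob_space M" "prob_space N" "f \<in> borel_measurable M" "g \<in> borel_measurable N"
  shows "(\<integral>\<^sup>+z. f (fst z) * g (snd z) \<partial>(M \<Otimes>\<^sub>M N)) = (\<integral>\<^sup>+x. f x \<partial>M) * (\<integral>\<^sup>+y. g y \<partial>N)"
proof -
  interpret pair_prob_space M N using assms(1,2) by (rule pair_prob_spaceI)
  have "(\<integral>\<^sup>+z. f (fst z) * g (snd z) \<partial>(M \<Otimes>\<^sub>M N)) = (\<integral>\<^sup>+x. \<integral>\<^sup>+y. f x * g y \<partial>N \<partial>M)"
    by (subst M2.nn_integral_fst[symmetric])
       (use assms(3,4) in \<open>simp_all add: measurable_compose[OF measurable_fst] measurable_compose[OF measurable_snd]\<close>)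
  also have "\<dots> = (\<integral>\<^sup>+x. f x * (\<integral>\<^sup>+y. g y \<partial>N) \<partial>M)"
    by (simp add: nn_integral_cmult assms(4))
  also have "\<dots> = (\<integral>\<^sup>+x. f x \<partial>M) * (\<integral>\<^sup>+y. g y \<partial>N)"
    by (simp add: nn_integral_multc assms(3))
  finally show ?thesis .
qed

lemma AE_pair_measure_conj:
  assumes "prob_space M" "prob_space N"
    and "{x \<in> space M. P x} \<in> sets M" "{y \<in> space N. Q y} \<in> sets N"
    and "AE x in M. P x" "AE y in N. Q y"
  shows "AE z in M \<Otimes>\<^sub>M N. P (fst z) \<and> Q (snd z)"
proof -
  interpret pair_prob_space M N using assms(1,2) by (rule pair_prob_spaceI)
  have "{z \<in> space (M \<Otimes>\<^sub>M N). P (fst z) \<and> Q (snd z)} = {x \<in> space M. P x} \<times> {y \<in> space N. Q y}"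
    by (auto simp: space_pair_measure)
  then have "{z \<in> space (M \<Otimes>\<^sub>M N). P (fst z) \<and> Q (snd z)} \<in> sets (M \<Otimes>\<^sub>M N)"
    using assms(3,4) by simp
  moreover have "AE x in M. AE y in N. P x \<and> Q y"
    using assms(5) by eventually_elim (use assms(6) in auto)
  ultimately show ?thesis by (intro AE_pair_measure) auto
qed

abbreviation unif01 :: "real measure" where
  "unif01 \<equiv> uniform_measure lborel {0..1}"

abbreviation Exp1 :: "real measure" where
  "Exp1 \<equiv> density lborel (exponential_density 1)"

lemma prob_space_unif01: "prob_space unif01"
  by (rule prob_space_uniform_measure) auto

lemma prob_space_Exp1: "prob_space Exp1"
  by (rule prob_space_exponential_density) simp

lemma nn_integral_unif01:
  "f \<in> borel_measurable borel \<Longrightarrow> (\<integral>\<^sup>+x. f x \<partial>unif01) = (\<integral>\<^sup>+x. f x * indicator {0..1} x \<partial>lborel)"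
  by (subst nn_integral_uniform_measure) (auto simp: divide_ennreal_def)

lemma nn_integral_unif01_scaled_interval:
  fixes c1 c2 R :: real
  assumes "0 \<le> c1" "c1 \<le> c2" "c2 \<le> R" "0 < R"
  shows "(\<integral>\<^sup>+u. ennreal (if c1 \<le> u * R \<and> u * R < c2 then 1 else 0) \<partial>unif01) = ennreal ((c2 - c1) / R)"
proof -
  have eq: "ennreal (if c1 \<le> u * R \<and> u * R < c2 then 1 else 0) * indicator {0..1} u = indicator {c1 / R..<c2 / R} u" for u
  proof -
    have "c1 \<le> u * R \<longleftrightarrow> c1 / R \<le> u" "u * R < c2 \<longleftrightarrow> u < c2 / R"
      using assms(4) by (auto simp: field_simps)
    moreover have "c1 / R \<ge> 0" "c2 / R \<le> 1" using assms by (auto simp: field_simps)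
    ultimately show ?thesis by (auto simp: indicator_def)
  qed
  have "(\<integral>\<^sup>+u. ennreal (if c1 \<le> u * R \<and> u * R < c2 then 1 else 0) \<partial>unif01)
      = (\<integral>\<^sup>+u. indicator {c1 / R..<c2 / R} u \<partial>lborel)"
    by (subst nn_integral_unif01) (simp_all add: eq)
  also have "\<dots> = ennreal (c2 / R - c1 / R)"
    using assms by (simp add: divide_right_mono)
  finally show ?thesis by (simp add: diff_divide_distrib)
qed

lemma nn_integral_unif01_scaled_below:
  fixes R :: real
  assumes "1 \<le> R"
  shows "(\<integral>\<^sup>+u. ennreal (if u * R < 1 then 1 else 0) \<partial>unif01) \<le> ennreal (1 / R)"
proof -
  have le: "ennreal (if u * R < 1 then 1 else 0) * indicator {0..1} u \<le> indicator {0..1 / R} u" for u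
    using assms by (auto simp: indicator_def field_simps)
  have "(\<integral>\<^sup>+u. ennreal (if u * R < 1 then 1 else 0) \<partial>unif01)
      = (\<integral>\<^sup>+u. ennreal (if u * R < 1 then 1 else 0) * indicator {0..1} u \<partial>lborel)"
    by (subst nn_integral_unif01) simp_all
  also have "\<dots> \<le> (\<integral>\<^sup>+u. indicator {0..1 / R} u \<partial>lborel)"
    by (rule nn_integral_mono) (rule le)
  also have "\<dots> = ennreal (1 / R)" using assms by simp
  finally show ?thesis .
qed

lemma nn_integral_unif01_ident_ge: "ennreal (1 / 4) \<le> (\<integral>\<^sup>+v. ennreal v \<partial>unif01)"
proof -
  have le: "ennreal (1 / 2) * indicator {1 / 2..1} v \<le> ennreal v * indicator {0..1} v" for v :: real
  proof (cases "1 / 2 \<le> v \<and> v \<le> 1")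
    case True
    then have "ennreal (1 / 2) \<le> ennreal v" by (intro ennreal_leI) simp
    then show ?thesis using True by (simp add: indicator_def)
  qed (auto simp: indicator_def)
  have "ennreal (1 / 4) = ennreal (1 / 2) * ennreal (1 / 2)"
    by (subst ennreal_mult[symmetric]) auto
  also have "\<dots> = (\<integral>\<^sup>+v. ennreal (1 / 2) * indicator {1 / 2..1::real} v \<partial>lborel)"
    by (simp add: nn_integral_cmult)
  also have "\<dots> \<le> (\<integral>\<^sup>+v. ennreal v * indicator {0..1} v \<partial>lborel)"
    by (rule nn_integral_mono) (rule le)
  also have "\<dots> = (\<integral>\<^sup>+v. ennreal v \<partial>unif01)"
    by (subst nn_integral_unif01) simp_all
  finally show ?thesis .
qed

lemma nn_integral_Exp1_mean: "(\<integral>\<^sup>+e. ennreal e \<partial>Exp1) = 1"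
proof -
  have "(\<integral>\<^sup>+e. ennreal e \<partial>Exp1) = (\<integral>\<^sup>+e. ennreal (exponential_density 1 e * e ^ 1) \<partial>lborel)"
    by (subst nn_integral_density)
       (auto intro!: nn_integral_cong simp: ennreal_mult[symmetric] exponential_density_def)
  also have "\<dots> = 1"
    by (subst nn_integral_erlang_ith_moment) auto
  finally show ?thesis .
qed

definition sftl_configs :: "(nat \<Rightarrow> real) measure" where
  "sftl_configs = PiM UNIV (\<lambda>_. borel)"

definition sftl_input_borel :: "sftl_input measure" where
  "sftl_input_borel = (borel \<Otimes>\<^sub>M borel) \<Otimes>\<^sub>M (borel \<Otimes>\<^sub>M borel)"

definition sftl_move :: "nat \<Rightarrow> (nat \<Rightarrow> real) \<Rightarrow> sftl_input \<Rightarrow> (nat \<Rightarrow> real)" where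
  "sftl_move n x a = sftl_step n x (fst (fst a)) (snd (fst a)) (snd (snd a))"

lemma space_sftl_configs[simp]: "space sftl_configs = UNIV"
  by (simp add: sftl_configs_def space_PiM)

lemma sftl_chain_Suc_move: "sftl_chain n x \<omega> (Suc k) = sftl_move n (sftl_chain n x \<omega> k) (\<omega> k)"
  by (simp add: sftl_move_def)

lemma sftl_chain_Suc_shift:
  "sftl_chain n x \<omega> (Suc k) = sftl_chain n (sftl_move n x (\<omega> 0)) (\<lambda>i. \<omega> (Suc i)) k"
  by (induction k) (simp_all add: sftl_move_def)

lemma measurable_sftl_configs_component:
  "f \<in> measurable M sftl_configs \<Longrightarrow> (\<lambda>w. f w i) \<in> borel_measurable M"
  using measurable_compose[of f M _ "\<lambda>x. x i", OF _ measurable_component_singleton[of i UNIV]]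
  by (simp add: sftl_configs_def)

lemma measurable_sftl_rate[measurable]:
  assumes "f \<in> measurable M sftl_configs"
  shows "(\<lambda>w. sftl_rate n (f w)) \<in> borel_measurable M"
proof -
  have [measurable]: "(\<lambda>w. f w i) \<in> borel_measurable M" for i
    by (rule measurable_sftl_configs_component[OF assms])
  show ?thesis unfolding sftl_rate_def by measurable
qed

lemma measurable_sftl_cum[measurable]:
  assumes "f \<in> measurable M sftl_configs"
  shows "(\<lambda>w. sftl_cum n (f w) i) \<in> borel_measurable M"
proof -
  have [measurable]: "(\<lambda>w. f w i) \<in> borel_measurable M" for i
    by (rule measurable_sftl_configs_component[OF assms])
  show ?thesis unfolding sftl_cum_def by measurable
qed

lemma measurable_configs_input_cong:
  "sets IM = sets sftl_input_borel \<Longrightarrow>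
    measurable (sftl_configs \<Otimes>\<^sub>M IM) N = measurable (sftl_configs \<Otimes>\<^sub>M sftl_input_borel) N"
  by (rule measurable_cong_sets) (auto intro!: sets_pair_measure_cong)

lemma measurable_sftl_move:
  assumes "sets IM = sets sftl_input_borel"
  shows "(\<lambda>p. sftl_move n (fst p) (snd p)) \<in> measurable (sftl_configs \<Otimes>\<^sub>M IM) sftl_configs"
proof -
  let ?M = "sftl_configs \<Otimes>\<^sub>M sftl_input_borel"
  have [measurable]: "fst \<in> measurable ?M sftl_configs" by simp
  have [measurable]: "(\<lambda>p. fst p i) \<in> borel_measurable ?M" for i
    by (rule measurable_sftl_configs_component) simp
  have [measurable]: "(\<lambda>p. fst (fst (snd p))) \<in> borel_measurable ?M"
     "(\<lambda>p. snd (fst (snd p))) \<in> borel_measurable ?M"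
     "(\<lambda>p. snd (snd (snd p))) \<in> borel_measurable ?M"
    by (simp_all add: sftl_input_borel_def)
  have coord: "sftl_move n x a k =
    (let u = fst (fst a); v = snd (fst a); j = snd (snd a); r = u * sftl_rate n x in
     if r < 1 then (if k = 1 then x 1 + j else x k)
     else if (\<exists>i\<in>{2..n}. r < sftl_cum n x i) then
       (if k = (LEAST i. 2 \<le> i \<and> i \<le> n \<and> r < sftl_cum n x i) then x k + v * (x (k - 1) - x k) else x k)
     else x k)" for x a k
    unfolding sftl_move_def sftl_step_def Let_def by auto
  have "(\<lambda>p. sftl_move n (fst p) (snd p) k) \<in> borel_measurable ?M" for k
    unfolding coord Let_def by measurable
  then have "(\<lambda>p. sftl_move n (fst p) (snd p)) \<in> measurable ?M sftl_configs"
    unfolding sftl_configs_def by (rule measurable_PiM_single') simp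
  then show ?thesis unfolding measurable_configs_input_cong[OF assms] .
qed

lemma measurable_sftl_chain:
  assumes "sets IM = sets sftl_input_borel"
  shows "(\<lambda>p. sftl_chain n (fst p) (snd p) k) \<in> measurable (sftl_configs \<Otimes>\<^sub>M PiM UNIV (\<lambda>_. IM)) sftl_configs"
proof (induction k)
  case (Suc k)
  have "(\<lambda>p. snd p k) \<in> measurable (sftl_configs \<Otimes>\<^sub>M PiM UNIV (\<lambda>_. IM)) IM"
    by measurable
  from measurable_comp[OF measurable_Pair[OF Suc this] measurable_sftl_move[OF assms]]
  show ?case by (simp add: o_def sftl_chain_Suc_move del: sftl_chain.simps(2))
qed simp

subsection \<open>Expected total cost of a stopped chain\<close>

definition stopped_cost ::
    "nat \<Rightarrow> ((nat \<Rightarrow> real) \<Rightarrow> bool) \<Rightarrow> ((nat \<Rightarrow> real) \<Rightarrow> sftl_input \<Rightarrow> ennreal)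
      \<Rightarrow> (nat \<Rightarrow> real) \<Rightarrow> (nat \<Rightarrow> sftl_input) \<Rightarrow> nat \<Rightarrow> ennreal" where
  "stopped_cost n stop c x \<omega> k =
    (if \<forall>j\<in>{..k}. \<not> stop (sftl_chain n x \<omega> j) then c (sftl_chain n x \<omega> k) (\<omega> k) else 0)"

lemma stopped_cost_0: "stopped_cost n stop c x \<omega> 0 = (if stop x then 0 else c x (\<omega> 0))"
  by (simp add: stopped_cost_def)

lemma stopped_cost_Suc: "stopped_cost n stop c x \<omega> (Suc k) =
   (if stop x then 0 else stopped_cost n stop c (sftl_move n x (\<omega> 0)) (\<lambda>i. \<omega> (Suc i)) k)"
  unfolding stopped_cost_def atMost_Suc_eq_insert_0
  by (auto simp: sftl_chain_Suc_shift simp del: sftl_chain.simps(2))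

lemma measurable_stopped_cost:
  assumes IM: "sets IM = sets sftl_input_borel"
    and stop: "Measurable.pred sftl_configs stop"
    and c: "(\<lambda>p. c (fst p) (snd p)) \<in> borel_measurable (sftl_configs \<Otimes>\<^sub>M IM)"
  shows "(\<lambda>p. stopped_cost n stop c (fst p) (snd p) k) \<in> borel_measurable (sftl_configs \<Otimes>\<^sub>M PiM UNIV (\<lambda>_. IM))"
proof -
  let ?M = "sftl_configs \<Otimes>\<^sub>M PiM UNIV (\<lambda>_. IM)"
  have [measurable]: "Measurable.pred ?M (\<lambda>p. stop (sftl_chain n (fst p) (snd p) j))" for j
    using measurable_compose[OF measurable_sftl_chain[OF IM] stop] .
  have "(\<lambda>p. (sftl_chain n (fst p) (snd p) k, snd p k)) \<in> measurable ?M (sftl_configs \<Otimes>\<^sub>M IM)"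
    by (intro measurable_Pair measurable_sftl_chain[OF IM]) measurable
  from measurable_compose[OF this c]
  have [measurable]: "(\<lambda>p. c (sftl_chain n (fst p) (snd p) k) (snd p k)) \<in> borel_measurable ?M"
    by simp
  show ?thesis unfolding stopped_cost_def by measurable
qed

lemma nn_integral_PiM_split_first:
  assumes "prob_space M"
    and f: "f \<in> borel_measurable (M \<Otimes>\<^sub>M PiM UNIV (\<lambda>_::nat. M))"
  shows "(\<integral>\<^sup>+\<omega>. f (\<omega> 0, \<lambda>i. \<omega> (Suc i)) \<partial>PiM UNIV (\<lambda>_. M))
    = (\<integral>\<^sup>+a. \<integral>\<^sup>+\<omega>. f (a, \<omega>) \<partial>PiM UNIV (\<lambda>_. M) \<partial>M)"
proof -
  interpret M: prob_space M by fact
  interpret S: sequence_space M ..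
  interpret P: pair_sigma_finite M S.S ..
  have split: "(\<lambda>\<omega>. (\<omega> 0, \<lambda>i. \<omega> (Suc i))) \<in> measurable S.S (M \<Otimes>\<^sub>M S.S)"
    by (intro measurable_Pair measurable_PiM_single') (auto simp: space_PiM)
  have "(\<integral>\<^sup>+\<omega>. f (\<omega> 0, \<lambda>i. \<omega> (Suc i)) \<partial>S.S)
      = (\<integral>\<^sup>+\<omega>. f (\<omega> 0, \<lambda>i. \<omega> (Suc i)) \<partial>distr (M \<Otimes>\<^sub>M S.S) S.S (\<lambda>(s, \<omega>). case_nat s \<omega>))"
    by (simp only: S.PiM_iter)
  also have "\<dots> = (\<integral>\<^sup>+p. f p \<partial>(M \<Otimes>\<^sub>M S.S))"
    using measurable_compose[OF split f] by (subst nn_integral_distr) (simp_all add: split_beta')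
  also have "\<dots> = (\<integral>\<^sup>+a. \<integral>\<^sup>+\<omega>. f (a, \<omega>) \<partial>S.S \<partial>M)"
    using S.nn_integral_fst[OF f] by simp
  finally show ?thesis .
qed

lemma nn_integral_sum_stopped_cost_le:
  assumes IM: "prob_space IM" "sets IM = sets sftl_input_borel"
    and stop: "Measurable.pred sftl_configs stop"
    and c: "(\<lambda>p. c (fst p) (snd p)) \<in> borel_measurable (sftl_configs \<Otimes>\<^sub>M IM)"
    and inv: "\<And>x. x \<in> R \<Longrightarrow> \<not> stop x \<Longrightarrow> AE a in IM. sftl_move n x a \<in> R"
    and drift: "\<And>x. x \<in> R \<Longrightarrow> \<not> stop x \<Longrightarrow> (\<integral>\<^sup>+a. c x a + F (sftl_move n x a) \<partial>IM) \<le> F x"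
  shows "x \<in> R \<Longrightarrow> (\<integral>\<^sup>+\<omega>. (\<Sum>k<N. stopped_cost n stop c x \<omega> k) \<partial>PiM UNIV (\<lambda>_. IM)) \<le> F x"
proof (induction N arbitrary: x)
  case (Suc N)
  interpret IM: prob_space IM by (rule IM(1))
  let ?S = "PiM UNIV (\<lambda>_::nat. IM)"
  define h where "h p = (\<Sum>k<N. stopped_cost n stop c (fst p) (snd p) k)" for p
  have h: "h \<in> borel_measurable (sftl_configs \<Otimes>\<^sub>M ?S)"
    unfolding h_def by (intro borel_measurable_sum measurable_stopped_cost[OF IM(2) stop c])
  show ?case
  proof (cases "stop x")
    case False
    have [measurable]: "(\<lambda>a. c x a) \<in> borel_measurable IM"
      using measurable_compose[OF measurable_Pair[OF measurable_const[of x] measurable_ident] c] by simp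
    have move: "(\<lambda>a. sftl_move n x a) \<in> measurable IM sftl_configs"
      using measurable_compose[OF measurable_Pair[OF measurable_const[of x] measurable_ident]
          measurable_sftl_move[OF IM(2)]] by simp
    have "(\<lambda>p. (sftl_move n x (fst p), snd p)) \<in> measurable (IM \<Otimes>\<^sub>M ?S) (sftl_configs \<Otimes>\<^sub>M ?S)"
      by (intro measurable_Pair measurable_compose[OF measurable_fst move]) simp
    from measurable_compose[OF this h]
    have g: "(\<lambda>p. c x (fst p) + h (sftl_move n x (fst p), snd p)) \<in> borel_measurable (IM \<Otimes>\<^sub>M ?S)"
      by measurable
    have hx: "(\<lambda>\<omega>. h (y, \<omega>)) \<in> borel_measurable ?S" for y
      using measurable_compose[OF measurable_Pair[OF measurable_const[of y] measurable_ident] h] by simp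
    have "(\<integral>\<^sup>+\<omega>. (\<Sum>k<Suc N. stopped_cost n stop c x \<omega> k) \<partial>?S)
       = (\<integral>\<^sup>+\<omega>. c x (\<omega> 0) + h (sftl_move n x (\<omega> 0), \<lambda>i. \<omega> (Suc i)) \<partial>?S)"
      using False unfolding sum.lessThan_Suc_shift by (simp add: stopped_cost_0 stopped_cost_Suc h_def)
    also have "\<dots> = (\<integral>\<^sup>+a. \<integral>\<^sup>+\<omega>. c x a + h (sftl_move n x a, \<omega>) \<partial>?S \<partial>IM)"
      using nn_integral_PiM_split_first[OF IM(1) g] by simp
    also have "\<dots> = (\<integral>\<^sup>+a. c x a + \<integral>\<^sup>+\<omega>. h (sftl_move n x a, \<omega>) \<partial>?S \<partial>IM)"
      by (intro nn_integral_cong, subst nn_integral_add)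
         (auto simp: hx prob_space.emeasure_space_1[OF prob_space_PiM] IM(1))
    also have "\<dots> \<le> (\<integral>\<^sup>+a. c x a + F (sftl_move n x a) \<partial>IM)"
      using inv[OF Suc.prems False]
      by (intro nn_integral_mono_AE, eventually_elim) (use Suc.IH in \<open>auto simp: h_def intro: add_left_mono\<close>)
    also have "\<dots> \<le> F x" by (rule drift[OF Suc.prems False])
    finally show ?thesis .
  next
    case True
    then show ?thesis unfolding sum.lessThan_Suc_shift by (simp add: stopped_cost_0 stopped_cost_Suc)
  qed
qed simp

lemma nn_integral_suminf_stopped_cost_le:
  assumes IM: "prob_space IM" "sets IM = sets sftl_input_borel"
    and stop: "Measurable.pred sftl_configs stop"
    and c: "(\<lambda>p. c (fst p) (snd p)) \<in> borel_measurable (sftl_configs \<Otimes>\<^sub>M IM)"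
    and inv: "\<And>x. x \<in> R \<Longrightarrow> \<not> stop x \<Longrightarrow> AE a in IM. sftl_move n x a \<in> R"
    and drift: "\<And>x. x \<in> R \<Longrightarrow> \<not> stop x \<Longrightarrow> (\<integral>\<^sup>+a. c x a + F (sftl_move n x a) \<partial>IM) \<le> F x"
    and x: "x \<in> R"
  shows "(\<integral>\<^sup>+\<omega>. (\<Sum>k. stopped_cost n stop c x \<omega> k) \<partial>PiM UNIV (\<lambda>_. IM)) \<le> F x"
proof -
  let ?S = "PiM UNIV (\<lambda>_::nat. IM)"
  have m: "(\<lambda>\<omega>. stopped_cost n stop c x \<omega> k) \<in> borel_measurable ?S" for k
    using measurable_compose[OF measurable_Pair[OF measurable_const[of x] measurable_ident]
        measurable_stopped_cost[OF IM(2) stop c, of n k]] by simp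
  have "(\<integral>\<^sup>+\<omega>. (\<Sum>k. stopped_cost n stop c x \<omega> k) \<partial>?S) = (\<Sum>k. \<integral>\<^sup>+\<omega>. stopped_cost n stop c x \<omega> k \<partial>?S)"
    by (rule nn_integral_suminf) (rule m)
  also have "\<dots> \<le> F x"
  proof (rule suminf_le_const)
    fix N
    have "(\<Sum>k<N. \<integral>\<^sup>+\<omega>. stopped_cost n stop c x \<omega> k \<partial>?S)
       = (\<integral>\<^sup>+\<omega>. (\<Sum>k<N. stopped_cost n stop c x \<omega> k) \<partial>?S)"
      by (rule nn_integral_sum[symmetric]) (simp add: m)
    also have "\<dots> \<le> F x" by (rule nn_integral_sum_stopped_cost_le[OF IM stop c inv drift x])
    finally show "(\<Sum>k<N. \<integral>\<^sup>+\<omega>. stopped_cost n stop c x \<omega> k \<partial>?S) \<le> F x" .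
  qed simp
  finally show ?thesis .
qed

definition sftl_ordered :: "nat \<Rightarrow> (nat \<Rightarrow> real) \<Rightarrow> bool" where
  "sftl_ordered n x \<longleftrightarrow> (\<forall>i\<in>{1..<n}. x (i + 1) \<le> x i)"

definition sftl_input_admissible :: "sftl_input \<Rightarrow> bool" where
  "sftl_input_admissible a \<longleftrightarrow> 0 \<le> fst (fst a) \<and> fst (fst a) \<le> 1 \<and> 0 \<le> snd (fst a) \<and> snd (fst a) \<le> 1
     \<and> 0 < fst (snd a) \<and> 0 < snd (snd a)"

lemma sftl_ordered_le: "sftl_ordered n x \<Longrightarrow> 1 \<le> i \<Longrightarrow> i \<le> j \<Longrightarrow> j \<le> n \<Longrightarrow> x j \<le> x i"
proof (induction j)
  case (Suc j)
  show ?case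
  proof (cases "i = Suc j")
    case False
    then have "x j \<le> x i" using Suc by simp
    moreover have "x (j + 1) \<le> x j" using Suc.prems False unfolding sftl_ordered_def by auto
    ultimately show ?thesis by simp
  qed simp
qed simp

lemma sftl_cum_eq: "1 \<le> i \<Longrightarrow> sftl_cum n x i = 1 + x 1 - x i"
  using sum_telescope_down[of 1 i x] by (simp add: sftl_cum_def numeral_2_eq_2)

lemma sftl_rate_eq: "1 \<le> n \<Longrightarrow> sftl_rate n x = 1 + x 1 - x n"
  using sftl_cum_eq[of n n x] by (simp add: sftl_cum_def sftl_rate_def)

lemma sftl_rate_ge_1: "sftl_ordered n x \<Longrightarrow> 1 \<le> n \<Longrightarrow> 1 \<le> sftl_rate n x"
  using sftl_ordered_le[of n x 1 n] by (simp add: sftl_rate_eq)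

lemma sftl_cum_mono:
  "sftl_ordered n x \<Longrightarrow> 1 \<le> i \<Longrightarrow> i \<le> j \<Longrightarrow> j \<le> n \<Longrightarrow> sftl_cum n x i \<le> sftl_cum n x j"
  using sftl_ordered_le[of n x i j] by (simp add: sftl_cum_eq)

lemma sftl_move_cases:
  fixes n :: nat and x :: "nat \<Rightarrow> real" and a :: sftl_input
  defines "r \<equiv> fst (fst a) * sftl_rate n x"
  obtains (leader) "r < 1" "sftl_move n x a = x(1 := x 1 + snd (snd a))"
    | (follower) i where "i \<in> {2..n}" "1 \<le> r" "sftl_cum n x (i - 1) \<le> r" "r < sftl_cum n x i"
        "sftl_move n x a = x(i := x i + snd (fst a) * (x (i - 1) - x i))"
    | (none) "1 \<le> r" "\<forall>i\<in>{2..n}. sftl_cum n x i \<le> r" "sftl_move n x a = x"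
proof -
  consider "r < 1" | "\<not> r < 1" "\<exists>i\<in>{2..n}. r < sftl_cum n x i" | "\<not> r < 1" "\<not> (\<exists>i\<in>{2..n}. r < sftl_cum n x i)"
    by blast
  then show ?thesis
  proof cases
    case 1
    then show ?thesis by (intro leader) (simp_all add: sftl_move_def sftl_step_def r_def Let_def)
  next
    case 2
    define i where "i = (LEAST i. 2 \<le> i \<and> i \<le> n \<and> r < sftl_cum n x i)"
    have i: "2 \<le> i \<and> i \<le> n \<and> r < sftl_cum n x i"
      unfolding i_def by (rule LeastI_ex) (use 2 in auto)
    have "sftl_cum n x (i - 1) \<le> r"
    proof (cases "i = 2")
      case True then show ?thesis using 2 by (simp add: sftl_cum_def)
    next
      case False
      then have "i - 1 < i" "2 \<le> i - 1" "i - 1 \<le> n" using i by auto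
      from not_less_Least[OF this(1)[unfolded i_def]] this(2,3) show ?thesis
        by (auto simp: i_def)
    qed
    moreover have "sftl_move n x a = x(i := x i + snd (fst a) * (x (i - 1) - x i))"
      using 2 by (simp add: sftl_move_def sftl_step_def r_def[symmetric] Let_def i_def)
    ultimately show ?thesis using i 2 by (intro follower[of i]) auto
  next
    case 3
    then show ?thesis by (intro none) (auto simp: sftl_move_def sftl_step_def Let_def r_def)
  qed
qed

lemma sftl_move_ordered_mono:
  assumes "sftl_ordered n x" "sftl_input_admissible a"
  shows "sftl_ordered n (sftl_move n x a) \<and> (\<forall>k. x k \<le> sftl_move n x a k)"
  using sftl_move_cases[of a n x]
proof cases
  case leader
  have j: "0 < snd (snd a)" using assms(2) by (simp add: sftl_input_admissible_def)
  have "sftl_ordered n (sftl_move n x a)" unfolding sftl_ordered_def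
  proof
    fix k assume k: "k \<in> {1..<n}"
    then have "x (k + 1) \<le> x k" using assms(1) by (auto simp: sftl_ordered_def)
    then show "sftl_move n x a (k + 1) \<le> sftl_move n x a k" using j k by (auto simp: leader(2))
  qed
  then show ?thesis using j by (simp add: leader(2))
next
  case (follower i)
  have "x i \<le> x (i - 1)" using sftl_ordered_le[OF assms(1), of "i - 1" i] follower(1) by auto
  moreover have "0 \<le> snd (fst a)" "snd (fst a) \<le> 1" using assms(2) by (auto simp: sftl_input_admissible_def)
  ultimately have "x i \<le> x i + snd (fst a) * (x (i - 1) - x i)"
    "x i + snd (fst a) * (x (i - 1) - x i) \<le> x (i - 1)"
    using mult_left_le_one_le[of "x (i - 1) - x i" "snd (fst a)"] by simp_all
  then show ?thesis using assms(1) follower(1) by (auto simp: follower(5) sftl_ordered_def)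
next
  case none
  then show ?thesis using assms by simp
qed

lemma sftl_rate_move_follower:
  assumes "sftl_ordered n x" "2 \<le> n" "sftl_input_admissible a" "1 \<le> fst (fst a) * sftl_rate n x"
  shows "sftl_rate n (sftl_move n x a) \<le> sftl_rate n x"
proof -
  have "sftl_move n x a 1 = x 1"
    using assms(4) by (cases rule: sftl_move_cases[of a n x]) auto
  moreover have "x n \<le> sftl_move n x a n" using sftl_move_ordered_mono[OF assms(1,3)] by auto
  ultimately show ?thesis using assms(2) by (simp add: sftl_rate_eq)
qed

definition sftl_selects :: "nat \<Rightarrow> (nat \<Rightarrow> real) \<Rightarrow> real \<Rightarrow> nat \<Rightarrow> bool" where
  "sftl_selects n x u i \<longleftrightarrow> sftl_cum n x (i - 1) \<le> u * sftl_rate n x \<and> u * sftl_rate n x < sftl_cum n x i"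

lemma sftl_selects_unique:
  assumes "sftl_ordered n x" "i \<in> {2..n}" "j \<in> {2..n}" "sftl_selects n x u i" "sftl_selects n x u j"
  shows "i = j"
proof -
  have False if "k \<in> {2..n}" "l \<in> {2..n}" "k < l" "sftl_selects n x u k" "sftl_selects n x u l" for k l
  proof -
    have "sftl_cum n x k \<le> sftl_cum n x (l - 1)" using that by (intro sftl_cum_mono[OF assms(1)]) auto
    then show False using that by (auto simp: sftl_selects_def)
  qed
  then show ?thesis using assms by (metis linorder_neqE_nat)
qed

lemma sftl_move_selected:
  assumes "sftl_ordered n x" "i \<in> {2..n}" "sftl_selects n x (fst (fst a)) i"
  shows "sftl_move n x a = x(i := x i + snd (fst a) * (x (i - 1) - x i))"
proof -
  have h: "1 \<le> i - 1" "i - 1 \<le> n" using assms(2) by auto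
  have "1 \<le> sftl_cum n x (i - 1)"
    using sftl_ordered_le[OF assms(1) order_refl h] sftl_cum_eq[OF h(1)] by simp
  with assms(3) have r1: "1 \<le> fst (fst a) * sftl_rate n x" by (simp add: sftl_selects_def)
  show ?thesis
  proof (cases rule: sftl_move_cases[of a n x])
    case (follower j)
    then have "sftl_selects n x (fst (fst a)) j" by (simp add: sftl_selects_def)
    with sftl_selects_unique[OF assms(1) follower(1) assms(2) _ assms(3)] follower(5) show ?thesis
      by simp
  next
    case leader
    then show ?thesis using r1 by simp
  next
    case none
    then show ?thesis using assms(2,3) by (force simp: sftl_selects_def)
  qed
qed

subsection \<open>The capped potential\<close>

definition capped_sum :: "nat set \<Rightarrow> (nat \<Rightarrow> real) \<Rightarrow> real" where
  "capped_sum I x = (\<Sum>i\<in>I. min (x i) 1)"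

definition capped_gap :: "(nat \<Rightarrow> real) \<Rightarrow> nat \<Rightarrow> real" where
  "capped_gap x i = min (x (i - 1)) 1 - min (x i) 1"

lemma capped_gap_bounds:
  assumes "sftl_ordered n x" "i \<in> {2..n}"
  shows "0 \<le> capped_gap x i \<and> capped_gap x i \<le> x (i - 1) - x i"
proof -
  have "x i \<le> x (i - 1)" using assms(2) by (intro sftl_ordered_le[OF assms(1)]) auto
  then show ?thesis by (auto simp: capped_gap_def min_def)
qed

lemma capped_sum_le_move:
  assumes "sftl_ordered n x" "sftl_input_admissible a"
  shows "capped_sum I x \<le> capped_sum I (sftl_move n x a)"
  using sftl_move_ordered_mono[OF assms] unfolding capped_sum_def by (intro sum_mono min.mono) auto

text \<open>A move of a selected particle \<open>i\<close> closes the fraction \<open>v\<close> of its gap, hence at least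
  the fraction \<open>v\<close> of its capped gap, by concavity of \<open>min(\<cdot>, 1)\<close>.\<close>

lemma capped_sum_move_gain:
  assumes "sftl_ordered n x" "sftl_input_admissible a" "I \<subseteq> {2..n}" "finite I"
  shows "(\<Sum>i\<in>I. if sftl_selects n x (fst (fst a)) i then snd (fst a) * capped_gap x i else 0)
     \<le> capped_sum I (sftl_move n x a) - capped_sum I x"
proof -
  have gain: "capped_sum I (sftl_move n x a) - capped_sum I x = (\<Sum>i\<in>I. min (sftl_move n x a i) 1 - min (x i) 1)"
    by (simp add: capped_sum_def sum_subtractf)
  show ?thesis
  proof (cases "\<exists>i\<in>I. sftl_selects n x (fst (fst a)) i")
    case False
    then show ?thesis using capped_sum_le_move[OF assms(1,2), of I] by (simp add: sum.neutral)
  next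
    case True
    then obtain i where i: "i \<in> I" "sftl_selects n x (fst (fst a)) i" by blast
    have i2: "i \<in> {2..n}" using i assms(3) by auto
    have only_i: "sftl_selects n x (fst (fst a)) k \<longleftrightarrow> k = i" if "k \<in> I" for k
      using sftl_selects_unique[OF assms(1) i2 _ i(2)] that assms(3) i(2) by blast
    have move: "sftl_move n x a = x(i := x i + snd (fst a) * (x (i - 1) - x i))"
      by (rule sftl_move_selected[OF assms(1) i2 i(2)])
    have "(\<Sum>k\<in>I. if sftl_selects n x (fst (fst a)) k then snd (fst a) * capped_gap x k else 0)
        = snd (fst a) * capped_gap x i"
      using only_i i(1) assms(4) by (simp add: sum.delta cong: sum.cong)
    also have "\<dots> \<le> min (x i + snd (fst a) * (x (i - 1) - x i)) 1 - min (x i) 1"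
      using capped_gap_bounds[OF assms(1) i2] assms(2) unfolding capped_gap_def sftl_input_admissible_def
      by (intro min_one_concave_step) auto
    also have "\<dots> = (\<Sum>k\<in>I. if k = i then min (x i + snd (fst a) * (x (i - 1) - x i)) 1 - min (x i) 1 else 0)"
      using i(1) assms(4) by simp
    also have "\<dots> = (\<Sum>k\<in>I. min (sftl_move n x a k) 1 - min (x k) 1)"
      by (intro sum.cong) (auto simp: move)
    finally show ?thesis unfolding gain .
  qed
qed

subsection \<open>Expected cost and expected gain of a step\<close>

text \<open>The first summand dominates the holding time; the other two only serve to make
  finite total cost force stopping (see \<open>sftl_eventually_stopped\<close>).\<close>

definition sftl_step_cost :: "nat \<Rightarrow> (nat \<Rightarrow> real) \<Rightarrow> sftl_input \<Rightarrow> ennreal" where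
  "sftl_step_cost n x a = ennreal (max 0 (fst (snd a)) / sftl_rate n x + 1 / sftl_rate n x
     + (if fst (fst a) * sftl_rate n x < 1 then 1 else 0))"

definition sftl_lyapunov :: "nat \<Rightarrow> nat \<Rightarrow> (nat \<Rightarrow> real) \<Rightarrow> ennreal" where
  "sftl_lyapunov m n' x = ennreal (22 * real m * (real m - capped_sum {Suc (n' + 2 - m)..n'} x))"

lemma measurable_capped_sum[measurable]:
  assumes "f \<in> measurable M sftl_configs"
  shows "(\<lambda>w. capped_sum I (f w)) \<in> borel_measurable M"
proof -
  have [measurable]: "(\<lambda>w. f w i) \<in> borel_measurable M" for i
    by (rule measurable_sftl_configs_component[OF assms])
  show ?thesis unfolding capped_sum_def by measurable
qed

lemma measurable_sftl_step_cost:
  assumes "sets IM = sets sftl_input_borel"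
  shows "(\<lambda>p. sftl_step_cost n (fst p) (snd p)) \<in> borel_measurable (sftl_configs \<Otimes>\<^sub>M IM)"
proof -
  let ?M = "sftl_configs \<Otimes>\<^sub>M sftl_input_borel"
  have [measurable]: "fst \<in> measurable ?M sftl_configs" by simp
  have [measurable]: "(\<lambda>p. fst (fst (snd p))) \<in> borel_measurable ?M"
     "(\<lambda>p. fst (snd (snd p))) \<in> borel_measurable ?M"
    by (simp_all add: sftl_input_borel_def)
  have "(\<lambda>p. sftl_step_cost n (fst p) (snd p)) \<in> borel_measurable ?M"
    unfolding sftl_step_cost_def by measurable
  then show ?thesis unfolding measurable_configs_input_cong[OF assms] .
qed

lemma block_capped_gap_energy_ge:
  assumes m: "3 \<le> m" "m - 1 \<le> n'" "n' \<le> n - 1"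
    and ord: "sftl_ordered n x" and top: "1 \<le> x (n' + 2 - m)" and bottom: "x n' < 1 / (2 * exp 1)"
  shows "12 \<le> 22 * real m * (\<Sum>i\<in>{Suc (n' + 2 - m)..n'}. capped_gap x i * (x (i - 1) - x i))"
proof -
  define I where "I = {Suc (n' + 2 - m)..n'}"
  define S where "S = (\<Sum>i\<in>I. capped_gap x i * (x (i - 1) - x i))"
  have gap: "0 \<le> capped_gap x i \<and> capped_gap x i \<le> x (i - 1) - x i" if "i \<in> I" for i
    using that m by (intro capped_gap_bounds[OF ord]) (auto simp: I_def)
  have "(\<Sum>i\<in>I. capped_gap x i) = min (x (n' + 2 - m)) 1 - min (x n') 1"
    unfolding I_def capped_gap_def using m by (intro sum_telescope_down) simp
  moreover have "1 / (2 * exp 1) \<le> (1 / 4 :: real)"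
    using exp_ge_add_one_self_aux[of 1] by (simp add: field_simps)
  ultimately have "3 / 4 \<le> (\<Sum>i\<in>I. capped_gap x i)" using top bottom by linarith
  then have "(3 / 4)\<^sup>2 \<le> card I * S"
    unfolding S_def using gap by (intro order_trans[OF power_mono square_sum_le_card_mult_sum]) auto
  then have "9 / 16 \<le> (real m - 2) * S" using m by (simp add: I_def of_nat_diff power2_eq_square)
  moreover have "0 \<le> S"
    unfolding S_def using gap by (intro sum_nonneg) (meson mult_nonneg_nonneg order_trans)
  ultimately have "9 / 16 \<le> (real m - 2) * S" "(real m - 2) * S \<le> real m * S"
    by (auto intro: mult_right_mono)
  then show ?thesis unfolding S_def I_def by (simp only: mult.assoc)
qed

locale sftl_jump_law =
  fixes \<theta> :: "real measure"
  assumes prob_space_jump: "prob_space \<theta>"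
    and sets_jump: "sets \<theta> = sets borel"
    and jump_pos: "emeasure \<theta> {x. x \<le> 0} = 0"
begin

abbreviation input_law :: "sftl_input measure" where
  "input_law \<equiv> sftl_input_measure \<theta>"

lemma input_law_eq: "input_law = (unif01 \<Otimes>\<^sub>M unif01) \<Otimes>\<^sub>M (Exp1 \<Otimes>\<^sub>M \<theta>)"
  by (simp add: sftl_input_measure_def)

lemma prob_space_input_law: "prob_space input_law"
  unfolding input_law_eq
  by (intro prob_space_pair prob_space_unif01 prob_space_Exp1 prob_space_jump)

lemma sets_input_law: "sets input_law = sets sftl_input_borel"
  unfolding sftl_input_measure_def sftl_input_borel_def
  by (intro sets_pair_measure_cong) (auto simp: sets_jump)

lemma measurable_sftl_move_input: "sftl_move n x \<in> measurable input_law sftl_configs"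
  using measurable_compose[OF measurable_Pair[OF measurable_const[of x] measurable_ident]
      measurable_sftl_move[OF sets_input_law]] by simp

lemma measurable_sftl_step_cost_input: "sftl_step_cost n x \<in> borel_measurable input_law"
  using measurable_compose[OF measurable_Pair[OF measurable_const[of x] measurable_ident]
      measurable_sftl_step_cost[OF sets_input_law]] by simp

lemma AE_input_admissible: "AE a in input_law. sftl_input_admissible a"
proof -
  have unit: "AE u in unif01. 0 \<le> u \<and> u \<le> 1" by (rule AE_uniform_measureI) auto
  have uv: "AE p in unif01 \<Otimes>\<^sub>M unif01. (0 \<le> fst p \<and> fst p \<le> 1) \<and> (0 \<le> snd p \<and> snd p \<le> 1)"
    by (rule AE_pair_measure_conj[OF prob_space_unif01 prob_space_unif01 _ _ unit unit]) measurable
  have "AE e in lborel. e \<noteq> 0" by (rule AE_lborel_singleton)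
  then have e: "AE e in Exp1. 0 < e"
    by (subst AE_density) (auto elim!: AE_mp simp: exponential_density_def)
  have j: "AE j in \<theta>. 0 < j"
    by (rule AE_I'[of "{x. x \<le> 0}"]) (auto simp: null_sets_def jump_pos sets_jump)
  have ej: "AE p in Exp1 \<Otimes>\<^sub>M \<theta>. 0 < fst p \<and> 0 < snd p"
    by (rule AE_pair_measure_conj[OF prob_space_Exp1 prob_space_jump _ _ e j]) (use sets_jump in measurable)
  have "AE a in input_law. ((0 \<le> fst (fst a) \<and> fst (fst a) \<le> 1) \<and> (0 \<le> snd (fst a) \<and> snd (fst a) \<le> 1))
      \<and> (0 < fst (snd a) \<and> 0 < snd (snd a))"
    unfolding input_law_eq
    by (rule AE_pair_measure_conj[OF prob_space_pair[OF prob_space_unif01 prob_space_unif01]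
          prob_space_pair[OF prob_space_Exp1 prob_space_jump] _ _ uv ej]) (use sets_jump in measurable)
  then show ?thesis by (simp add: sftl_input_admissible_def conj_ac)
qed

lemma nn_integral_input_law_u:
  assumes [measurable]: "h \<in> borel_measurable borel"
  shows "(\<integral>\<^sup>+a. h (fst (fst a)) \<partial>input_law) = (\<integral>\<^sup>+u. h u \<partial>unif01)"
proof -
  have "(\<integral>\<^sup>+a. h (fst (fst a)) \<partial>input_law) = (\<integral>\<^sup>+p. h (fst p) \<partial>(unif01 \<Otimes>\<^sub>M unif01))"
    unfolding input_law_eq
    by (rule nn_integral_fst_prob_pair) (auto intro!: prob_space_pair prob_space_unif01 prob_space_Exp1 prob_space_jump)
  also have "\<dots> = (\<integral>\<^sup>+u. h u \<partial>unif01)"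
    by (rule nn_integral_fst_prob_pair) (auto intro!: prob_space_unif01)
  finally show ?thesis .
qed

lemma nn_integral_input_law_uv:
  assumes [measurable]: "f \<in> borel_measurable borel" "g \<in> borel_measurable borel"
  shows "(\<integral>\<^sup>+a. f (fst (fst a)) * g (snd (fst a)) \<partial>input_law) = (\<integral>\<^sup>+u. f u \<partial>unif01) * (\<integral>\<^sup>+v. g v \<partial>unif01)"
proof -
  have "(\<integral>\<^sup>+a. f (fst (fst a)) * g (snd (fst a)) \<partial>input_law) = (\<integral>\<^sup>+p. f (fst p) * g (snd p) \<partial>(unif01 \<Otimes>\<^sub>M unif01))"
    unfolding input_law_eq
    by (rule nn_integral_fst_prob_pair[of _ _ "\<lambda>p. f (fst p) * g (snd p)"])
       (auto intro!: prob_space_pair prob_space_unif01 prob_space_Exp1 prob_space_jump)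
  also have "\<dots> = (\<integral>\<^sup>+u. f u \<partial>unif01) * (\<integral>\<^sup>+v. g v \<partial>unif01)"
    by (rule nn_integral_prob_pair_mult) (auto intro!: prob_space_unif01)
  finally show ?thesis .
qed

lemma nn_integral_input_law_e:
  assumes [measurable]: "h \<in> borel_measurable borel"
  shows "(\<integral>\<^sup>+a. h (fst (snd a)) \<partial>input_law) = (\<integral>\<^sup>+e. h e \<partial>Exp1)"
proof -
  have "(\<integral>\<^sup>+a. h (fst (snd a)) \<partial>input_law) = (\<integral>\<^sup>+p. h (fst p) \<partial>(Exp1 \<Otimes>\<^sub>M \<theta>))"
    unfolding input_law_eq
    by (rule nn_integral_snd_prob_pair[of _ _ "\<lambda>p. h (fst p)"])
       (auto intro!: prob_space_pair prob_space_unif01 prob_space_Exp1 prob_space_jump)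
  also have "\<dots> = (\<integral>\<^sup>+e. h e \<partial>Exp1)"
    by (rule nn_integral_fst_prob_pair) (auto intro!: prob_space_Exp1 prob_space_jump)
  finally show ?thesis .
qed

lemma nn_integral_sftl_step_cost_le:
  assumes "sftl_ordered n x" "1 \<le> n"
  shows "(\<integral>\<^sup>+a. sftl_step_cost n x a \<partial>input_law) \<le> ennreal (3 / sftl_rate n x)"
proof -
  define R where "R = sftl_rate n x"
  have R: "1 \<le> R" using sftl_rate_ge_1[OF assms] by (simp add: R_def)
  have cost: "sftl_step_cost n x a = ennreal (max 0 (fst (snd a))) * ennreal (1 / R) + ennreal (1 / R)
     + ennreal (if fst (fst a) * R < 1 then 1 else 0)" for a
  proof -
    define A where "A = max 0 (fst (snd a))"
    define L where "L = (if fst (fst a) * R < 1 then 1 else 0::real)"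
    have nn: "0 \<le> A" "0 \<le> 1 / R" "0 \<le> L" "0 \<le> A / R" using R by (auto simp: A_def L_def)
    have "sftl_step_cost n x a = ennreal (A / R + 1 / R + L)"
      by (simp add: sftl_step_cost_def A_def L_def R_def)
    also have "\<dots> = ennreal A * ennreal (1 / R) + ennreal (1 / R) + ennreal L"
      using nn by (simp add: ennreal_plus[symmetric] ennreal_mult[symmetric] del: ennreal_plus)
    finally show ?thesis by (simp add: A_def L_def)
  qed
  have [measurable]: "(\<lambda>a. fst (snd a)) \<in> borel_measurable input_law" "(\<lambda>a. fst (fst a)) \<in> borel_measurable input_law"
    by (simp_all add: measurable_cong_sets[OF sets_input_law refl] sftl_input_borel_def)
  have "(\<integral>\<^sup>+a. sftl_step_cost n x a \<partial>input_law)
      = (\<integral>\<^sup>+a. ennreal (max 0 (fst (snd a))) * ennreal (1 / R) \<partial>input_law)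
        + (\<integral>\<^sup>+a. ennreal (1 / R) \<partial>input_law)
        + (\<integral>\<^sup>+a. ennreal (if fst (fst a) * R < 1 then 1 else 0) \<partial>input_law)"
    unfolding cost by (subst nn_integral_add; (subst nn_integral_add)?) auto
  also have "(\<integral>\<^sup>+a. ennreal (max 0 (fst (snd a))) * ennreal (1 / R) \<partial>input_law) = ennreal (1 / R)"
    using nn_integral_input_law_e[of "\<lambda>e. ennreal (max 0 e) * ennreal (1 / R)"]
    by (simp add: nn_integral_multc nn_integral_Exp1_mean)
  also have "(\<integral>\<^sup>+a. ennreal (1 / R) \<partial>input_law) = ennreal (1 / R)"
    using prob_space.emeasure_space_1[OF prob_space_input_law] by simp
  also have "(\<integral>\<^sup>+a. ennreal (if fst (fst a) * R < 1 then 1 else 0) \<partial>input_law) \<le> ennreal (1 / R)"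
    using nn_integral_input_law_u[of "\<lambda>u. ennreal (if u * R < 1 then 1 else 0)"]
      nn_integral_unif01_scaled_below[OF R] by simp
  finally have "(\<integral>\<^sup>+a. sftl_step_cost n x a \<partial>input_law) \<le> ennreal (1 / R) + ennreal (1 / R) + ennreal (1 / R)"
    by (simp add: add_left_mono)
  also have "\<dots> = ennreal (3 / R)"
    using R by (simp add: ennreal_plus[symmetric] del: ennreal_plus)
  finally show ?thesis by (simp add: R_def)
qed

lemma nn_integral_selects:
  assumes "sftl_ordered n x" "i \<in> {2..n}"
  shows "(\<integral>\<^sup>+u. ennreal (if sftl_selects n x u i then 1 else 0) \<partial>unif01)
    = ennreal ((x (i - 1) - x i) / sftl_rate n x)"
proof -
  have h: "1 \<le> i - 1" "i - 1 \<le> i" "i \<le> n" "1 \<le> i" using assms(2) by auto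
  have "1 \<le> sftl_cum n x (i - 1)"
    using sftl_ordered_le[OF assms(1) order_refl h(1)] h sftl_cum_eq[OF h(1)] by simp
  moreover have "sftl_cum n x (i - 1) \<le> sftl_cum n x i" by (rule sftl_cum_mono[OF assms(1) h(1-3)])
  moreover have "sftl_cum n x i \<le> sftl_rate n x"
    using sftl_cum_mono[OF assms(1) h(4) h(3) order_refl] by (simp add: sftl_cum_def sftl_rate_def)
  ultimately have "(\<integral>\<^sup>+u. ennreal (if sftl_selects n x u i then 1 else 0) \<partial>unif01)
      = ennreal ((sftl_cum n x i - sftl_cum n x (i - 1)) / sftl_rate n x)"
    unfolding sftl_selects_def by (intro nn_integral_unif01_scaled_interval) auto
  also have "sftl_cum n x i - sftl_cum n x (i - 1) = x (i - 1) - x i"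
    using sftl_cum_eq[OF h(1), of n x] sftl_cum_eq[OF h(4), of n x] by simp
  finally show ?thesis .
qed

text \<open>Whether \<open>i\<close> is selected depends only on \<open>u\<close>, the fraction of the capped gap that
  it closes only on the independent \<open>v\<close>, whose mean is at least \<open>1/4\<close>.\<close>

lemma nn_integral_capped_sum_gain_ge:
  assumes ord: "sftl_ordered n x" "1 \<le> n" and I: "I \<subseteq> {2..n}" "finite I"
  shows "ennreal ((\<Sum>i\<in>I. capped_gap x i * (x (i - 1) - x i)) / (4 * sftl_rate n x))
    \<le> (\<integral>\<^sup>+a. ennreal (capped_sum I (sftl_move n x a) - capped_sum I x) \<partial>input_law)"
proof -
  define R where "R = sftl_rate n x"
  define sel where "sel i u = ennreal (if sftl_selects n x u i then 1 else 0)" for i u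
  have R: "1 \<le> R" using sftl_rate_ge_1[OF ord] by (simp add: R_def)
  have gap: "0 \<le> capped_gap x i" "0 \<le> x (i - 1) - x i" "0 \<le> (x (i - 1) - x i) / R" if "i \<in> I" for i
    using capped_gap_bounds[OF ord(1)] that I R by fastforce+
  have [measurable]: "sel i \<in> borel_measurable borel" for i
    unfolding sel_def sftl_selects_def by measurable
  have [measurable]: "(\<lambda>a. fst (fst a)) \<in> borel_measurable input_law" "(\<lambda>a. snd (fst a)) \<in> borel_measurable input_law"
    by (simp_all add: measurable_cong_sets[OF sets_input_law refl] sftl_input_borel_def)
  have pointwise: "(\<Sum>i\<in>I. ennreal (capped_gap x i) * (sel i (fst (fst a)) * ennreal (snd (fst a))))
      \<le> ennreal (capped_sum I (sftl_move n x a) - capped_sum I x)"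
    if adm: "sftl_input_admissible a" for a
  proof -
    have v: "0 \<le> snd (fst a)" using adm by (simp add: sftl_input_admissible_def)
    have "(\<Sum>i\<in>I. ennreal (capped_gap x i) * (sel i (fst (fst a)) * ennreal (snd (fst a))))
        = (\<Sum>i\<in>I. ennreal (if sftl_selects n x (fst (fst a)) i then snd (fst a) * capped_gap x i else 0))"
      using gap v by (intro sum.cong) (auto simp: sel_def ennreal_mult[symmetric] mult.commute)
    also have "\<dots> = ennreal (\<Sum>i\<in>I. if sftl_selects n x (fst (fst a)) i then snd (fst a) * capped_gap x i else 0)"
      using gap v by (intro sum_ennreal) auto
    also have "\<dots> \<le> ennreal (capped_sum I (sftl_move n x a) - capped_sum I x)"
      using capped_sum_move_gain[OF ord(1) adm I] by (rule ennreal_leI)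
    finally show ?thesis .
  qed
  have "(\<Sum>i\<in>I. capped_gap x i * (x (i - 1) - x i)) / (4 * R)
      = (\<Sum>i\<in>I. capped_gap x i * ((x (i - 1) - x i) / R * (1 / 4)))"
    unfolding sum_divide_distrib by (intro sum.cong) auto
  then have "ennreal ((\<Sum>i\<in>I. capped_gap x i * (x (i - 1) - x i)) / (4 * R))
      = (\<Sum>i\<in>I. ennreal (capped_gap x i * ((x (i - 1) - x i) / R * (1 / 4))))"
    using gap R by (simp only:) (intro sum_ennreal[symmetric], simp)
  also have "\<dots> = (\<Sum>i\<in>I. ennreal (capped_gap x i) * (ennreal ((x (i - 1) - x i) / R) * ennreal (1 / 4)))"
    using gap by (intro sum.cong refl) (simp only: ennreal_mult')
  also have "\<dots> \<le> (\<Sum>i\<in>I. ennreal (capped_gap x i) * ((\<integral>\<^sup>+u. sel i u \<partial>unif01) * (\<integral>\<^sup>+v. ennreal v \<partial>unif01)))"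
  proof (intro sum_mono mult_left_mono)
    fix i assume "i \<in> I"
    with I have "i \<in> {2..n}" by blast
    with nn_integral_unif01_ident_ge
    show "ennreal ((x (i - 1) - x i) / R) * ennreal (1 / 4)
        \<le> (\<integral>\<^sup>+u. sel i u \<partial>unif01) * (\<integral>\<^sup>+v. ennreal v \<partial>unif01)"
      by (simp add: nn_integral_selects[OF ord(1)] sel_def R_def mult_left_mono)
  qed simp
  also have "\<dots> = (\<integral>\<^sup>+a. (\<Sum>i\<in>I. ennreal (capped_gap x i) * (sel i (fst (fst a)) * ennreal (snd (fst a)))) \<partial>input_law)"
    by (simp add: nn_integral_sum nn_integral_cmult nn_integral_input_law_uv)
  also have "\<dots> \<le> (\<integral>\<^sup>+a. ennreal (capped_sum I (sftl_move n x a) - capped_sum I x) \<partial>input_law)"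
    using AE_input_admissible by (intro nn_integral_mono_AE) (auto elim!: AE_mp intro: pointwise)
  finally show ?thesis by (simp add: R_def)
qed

lemma sftl_lyapunov_drift:
  assumes m: "3 \<le> m" "m \<le> n" "m - 1 \<le> n'" "n' \<le> n - 1"
    and ord: "sftl_ordered n x" and top: "1 \<le> x (n' + 2 - m)" and bottom: "x n' < 1 / (2 * exp 1)"
  shows "(\<integral>\<^sup>+a. sftl_step_cost n x a + sftl_lyapunov m n' (sftl_move n x a) \<partial>input_law)
    \<le> sftl_lyapunov m n' x"
proof -
  interpret prob_space input_law by (rule prob_space_input_law)
  define I where "I = {Suc (n' + 2 - m)..n'}"
  define K where "K = 22 * real m"
  define R where "R = sftl_rate n x"
  define S where "S = (\<Sum>i\<in>I. capped_gap x i * (x (i - 1) - x i))"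
  have I: "I \<subseteq> {2..n}" "finite I" "card I = m - 2" using m by (auto simp: I_def)
  have R: "1 \<le> R" using sftl_rate_ge_1[OF ord] m by (simp add: R_def)
  have F: "sftl_lyapunov m n' y = ennreal (K * (real m - capped_sum I y))" for y
    by (simp add: sftl_lyapunov_def K_def I_def)
  have capped_sum_le: "capped_sum I y \<le> real m - 2" for y
    using sum_mono[of I "\<lambda>i. min (y i) 1" "\<lambda>_. 1"] I(3) m(1) by (simp add: capped_sum_def)
  have cost_le_gain: "3 / R \<le> K * (S / (4 * R))"
    using block_capped_gap_energy_ge[OF m(1,3,4) ord top bottom] R
    by (simp add: K_def S_def I_def field_simps)
  have [measurable]: "(\<lambda>a. capped_sum I (sftl_move n x a)) \<in> borel_measurable input_law"
    by (rule measurable_capped_sum[OF measurable_sftl_move_input])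
  have [measurable]: "sftl_step_cost n x \<in> borel_measurable input_law"
    by (rule measurable_sftl_step_cost_input)
  let ?gain = "\<integral>\<^sup>+a. ennreal (capped_sum I (sftl_move n x a) - capped_sum I x) \<partial>input_law"
  have "(\<integral>\<^sup>+a. sftl_step_cost n x a \<partial>input_law) \<le> ennreal K * ennreal (S / (4 * R))"
    using nn_integral_sftl_step_cost_le[OF ord] m cost_le_gain R
    by (auto simp: R_def K_def ennreal_mult'[symmetric] intro: order_trans ennreal_leI)
  also have "\<dots> \<le> ennreal K * ?gain"
    unfolding S_def R_def using ord m I by (intro mult_left_mono nn_integral_capped_sum_gain_ge) auto
  finally have cost_le: "(\<integral>\<^sup>+a. sftl_step_cost n x a \<partial>input_law) \<le> ennreal K * ?gain" .
  have "(\<integral>\<^sup>+a. sftl_step_cost n x a + sftl_lyapunov m n' (sftl_move n x a) \<partial>input_law)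
      = (\<integral>\<^sup>+a. sftl_step_cost n x a \<partial>input_law) + (\<integral>\<^sup>+a. sftl_lyapunov m n' (sftl_move n x a) \<partial>input_law)"
    unfolding F by (rule nn_integral_add) simp_all
  also have "\<dots> \<le> ennreal K * ?gain + (\<integral>\<^sup>+a. sftl_lyapunov m n' (sftl_move n x a) \<partial>input_law)"
    using cost_le by (rule add_right_mono)
  also have "\<dots> = (\<integral>\<^sup>+a. ennreal (K * (capped_sum I (sftl_move n x a) - capped_sum I x))
          + ennreal (K * (real m - capped_sum I (sftl_move n x a))) \<partial>input_law)"
    unfolding F by (subst nn_integral_add) (auto simp: nn_integral_cmult K_def ennreal_mult')
  also have "\<dots> = (\<integral>\<^sup>+a. ennreal (K * (real m - capped_sum I x)) \<partial>input_law)"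
  proof (rule nn_integral_cong_AE)
    show "AE a in input_law. ennreal (K * (capped_sum I (sftl_move n x a) - capped_sum I x))
        + ennreal (K * (real m - capped_sum I (sftl_move n x a))) = ennreal (K * (real m - capped_sum I x))"
      using AE_input_admissible
    proof eventually_elim
      case (elim a)
      then show ?case using capped_sum_le_move[OF ord elim, of I] capped_sum_le[of "sftl_move n x a"] m(1)
        by (simp add: K_def ennreal_plus[symmetric] algebra_simps del: ennreal_plus)
    qed
  qed
  also have "\<dots> = sftl_lyapunov m n' x" by (simp add: F emeasure_space_1)
  finally show ?thesis .
qed

end

subsection \<open>Stopping and the time \<open>\<xi>\<close>\<close>

definition sftl_stopped :: "nat \<Rightarrow> (nat \<Rightarrow> real) \<Rightarrow> bool" where
  "sftl_stopped n' x \<longleftrightarrow> 0 < x (Suc n') \<or> 1 / (2 * exp 1) \<le> x n'"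

lemma measurable_sftl_stopped: "Measurable.pred sftl_configs (sftl_stopped n')"
proof -
  have [measurable]: "(\<lambda>x. x i) \<in> borel_measurable sftl_configs" for i
    by (rule measurable_sftl_configs_component[OF measurable_ident_sets[OF refl]])
  show ?thesis unfolding sftl_stopped_def by measurable
qed

lemma sftl_chain_ordered:
  assumes "sftl_ordered n s" "\<forall>k. sftl_input_admissible (\<omega> k)"
  shows "sftl_ordered n (sftl_chain n s \<omega> k)"
  using sftl_move_ordered_mono assms by (induction k) (simp_all add: sftl_chain_Suc_move del: sftl_chain.simps(2))

lemma sftl_hold_pos:
  assumes "sftl_ordered n s" "1 \<le> n" "\<forall>k. sftl_input_admissible (\<omega> k)"
  shows "0 < sftl_hold n s \<omega> k"
  using sftl_rate_ge_1[OF sftl_chain_ordered[OF assms(1,3)] assms(2), of k] assms(3)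
  by (simp add: sftl_hold_def sftl_input_admissible_def)

text \<open>Finite total cost forces stopping: otherwise the summable costs eventually exclude
  leader jumps, after which the total rate can only decrease and the costs stay above
  \<open>1/R\<close> for a fixed \<open>R\<close>.\<close>

lemma sftl_eventually_stopped:
  assumes ord: "sftl_ordered n s" and n: "2 \<le> n" and adm: "\<forall>k. sftl_input_admissible (\<omega> k)"
    and fin: "(\<Sum>k. stopped_cost n (sftl_stopped n') (sftl_step_cost n) s \<omega> k) \<noteq> \<top>"
  shows "\<exists>K. sftl_stopped n' (sftl_chain n s \<omega> K)"
proof (rule ccontr)
  assume "\<not> (\<exists>K. sftl_stopped n' (sftl_chain n s \<omega> K))"
  then have running: "\<And>k. \<not> sftl_stopped n' (sftl_chain n s \<omega> k)" by blast
  define R where "R k = sftl_rate n (sftl_chain n s \<omega> k)" for k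
  define f where "f k = max 0 (fst (snd (\<omega> k))) / R k + 1 / R k + (if fst (fst (\<omega> k)) * R k < 1 then 1 else 0)" for k
  have R1: "1 \<le> R k" for k unfolding R_def using sftl_rate_ge_1[OF sftl_chain_ordered[OF ord adm]] n by simp
  have "stopped_cost n (sftl_stopped n') (sftl_step_cost n) s \<omega> k = ennreal (f k)" for k
    using running by (simp add: stopped_cost_def sftl_step_cost_def f_def R_def)
  moreover have "0 \<le> f k" for k using R1[of k] by (simp add: f_def)
  ultimately have "summable f" using fin by (intro summable_suminf_not_top) simp_all
  then have lim: "f \<longlonglongrightarrow> 0" by (rule summable_LIMSEQ_zero)
  then obtain k0 where k0: "\<And>k. k0 \<le> k \<Longrightarrow> f k < 1"
    using order_tendstoD(2)[OF lim, of 1] by (auto simp: eventually_sequentially)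
  have R_dec: "R (Suc k) \<le> R k" if "k0 \<le> k" for k
  proof -
    have "0 \<le> max 0 (fst (snd (\<omega> k))) / R k + 1 / R k" using R1[of k] by simp
    then have "1 \<le> fst (fst (\<omega> k)) * R k" using k0[OF that] by (auto simp: f_def split: if_splits)
    then show ?thesis using sftl_rate_move_follower[OF sftl_chain_ordered[OF ord adm] n, of "\<omega> k" k] adm
      by (simp add: R_def sftl_chain_Suc_move del: sftl_chain.simps(2))
  qed
  have R_bound: "R k \<le> R k0" if "k0 \<le> k" for k
    using that by (induction k rule: dec_induct) (auto intro: order_trans R_dec)
  obtain k1 where k1: "\<And>k. k1 \<le> k \<Longrightarrow> f k < 1 / R k0"
    using order_tendstoD(2)[OF lim, of "1 / R k0"] R1[of k0] by (auto simp: eventually_sequentially)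
  define k where "k = max k0 k1"
  have "1 / R k0 \<le> 1 / R k" using R_bound[of k] R1[of k] by (simp add: k_def frac_le)
  also have "1 / R k \<le> f k" using R1[of k] by (simp add: f_def)
  finally show False using k1[of k] by (simp add: k_def)
qed

lemma sftl_X_jump_time:
  assumes hold: "\<And>k. 0 < sftl_hold n s \<omega> k"
  shows "sftl_X n s \<omega> (sftl_jt n s \<omega> K) = Some (sftl_chain n s \<omega> K)"
proof -
  have jt_Suc: "sftl_jt n s \<omega> (Suc k) = sftl_jt n s \<omega> k + sftl_hold n s \<omega> k" for k
    by (simp add: sftl_jt_def)
  have jt_mono: "sftl_jt n s \<omega> k \<le> sftl_jt n s \<omega> k'" if "k \<le> k'" for k k'
    unfolding sftl_jt_def using that hold by (intro sum_mono2) (auto intro: less_imp_le)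
  let ?P = "\<lambda>k. sftl_jt n s \<omega> k \<le> sftl_jt n s \<omega> K \<and> sftl_jt n s \<omega> K < sftl_jt n s \<omega> (Suc k)"
  have PK: "?P K" using hold[of K] by (simp add: jt_Suc)
  have "(LEAST k. ?P k) = K"
  proof (rule Least_equality)
    show "K \<le> k" if "?P k" for k
      using that jt_mono[of "Suc k" K] by (cases "K \<le> k") auto
  qed (rule PK)
  then show ?thesis unfolding sftl_X_def using PK by auto
qed

lemma sftl_xi_le_jump_time:
  assumes hold: "\<And>k. 0 < sftl_hold n s \<omega> k" and stop: "sftl_stopped n' (sftl_chain n s \<omega> K)"
  shows "sftl_xi n n' s \<omega> \<le> ennreal (sftl_jt n s \<omega> K)"
proof -
  let ?t = "sftl_jt n s \<omega> K"
  have X: "sftl_X n s \<omega> ?t = Some (sftl_chain n s \<omega> K)" by (rule sftl_X_jump_time[OF hold])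
  have t: "0 \<le> ?t" unfolding sftl_jt_def using hold by (intro sum_nonneg) (auto intro: less_imp_le)
  from stop consider "0 < sftl_chain n s \<omega> K (Suc n')" | "1 / (2 * exp 1) \<le> sftl_chain n s \<omega> K n'"
    by (auto simp: sftl_stopped_def)
  then show ?thesis
  proof cases
    case 1
    then have "?t \<in> {t. 0 \<le> t \<and> (\<exists>x. sftl_X n s \<omega> t = Some x \<and> 0 < x (n' + 1))}" using X t by simp
    then show ?thesis unfolding sftl_xi_def by (intro min.coboundedI1 INF_lower)
  next
    case 2
    then have "?t \<in> {t. 0 \<le> t \<and> (\<exists>x. sftl_X n s \<omega> t = Some x \<and> 1 / (2 * exp 1) \<le> x n')}" using X t by simp
    then show ?thesis unfolding sftl_xi_def by (intro min.coboundedI2 INF_lower)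
  qed
qed

lemma sftl_xi_le_stopped_cost:
  assumes ord: "sftl_ordered n s" and n: "2 \<le> n" and adm: "\<forall>k. sftl_input_admissible (\<omega> k)"
    and fin: "(\<Sum>k. stopped_cost n (sftl_stopped n') (sftl_step_cost n) s \<omega> k) \<noteq> \<top>"
  shows "sftl_xi n n' s \<omega> \<le> (\<Sum>k. stopped_cost n (sftl_stopped n') (sftl_step_cost n) s \<omega> k)"
proof -
  define K where "K = (LEAST K. sftl_stopped n' (sftl_chain n s \<omega> K))"
  have stop: "sftl_stopped n' (sftl_chain n s \<omega> K)"
    unfolding K_def using sftl_eventually_stopped[OF assms] by (rule LeastI_ex)
  have running: "\<not> sftl_stopped n' (sftl_chain n s \<omega> k)" if "k < K" for k
    using not_less_Least[OF that[unfolded K_def]] by (simp add: K_def)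
  have hold: "0 < sftl_hold n s \<omega> k" for k by (rule sftl_hold_pos[OF ord _ adm]) (use n in simp)
  have "sftl_xi n n' s \<omega> \<le> ennreal (sftl_jt n s \<omega> K)"
    by (rule sftl_xi_le_jump_time[OF hold stop])
  also have "\<dots> = (\<Sum>k<K. ennreal (sftl_hold n s \<omega> k))"
    unfolding sftl_jt_def using hold by (subst sum_ennreal) (auto intro: less_imp_le)
  also have "\<dots> \<le> (\<Sum>k<K. stopped_cost n (sftl_stopped n') (sftl_step_cost n) s \<omega> k)"
  proof (rule sum_mono)
    fix k assume "k \<in> {..<K}"
    then have "stopped_cost n (sftl_stopped n') (sftl_step_cost n) s \<omega> k
        = sftl_step_cost n (sftl_chain n s \<omega> k) (\<omega> k)"
      using running by (auto simp: stopped_cost_def)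
    moreover have "0 < fst (snd (\<omega> k))" using adm by (simp add: sftl_input_admissible_def)
    moreover have "1 \<le> sftl_rate n (sftl_chain n s \<omega> k)"
      using sftl_rate_ge_1[OF sftl_chain_ordered[OF ord adm]] n by simp
    ultimately show "ennreal (sftl_hold n s \<omega> k) \<le> stopped_cost n (sftl_stopped n') (sftl_step_cost n) s \<omega> k"
      by (auto simp: sftl_step_cost_def sftl_hold_def intro!: ennreal_leI)
  qed
  also have "\<dots> \<le> (\<Sum>k. stopped_cost n (sftl_stopped n') (sftl_step_cost n) s \<omega> k)"
    by (rule sum_le_suminf[OF summableI]) auto
  finally show ?thesis .
qed

context sftl_jump_law
begin

lemma sftl_E_xi_le:
  assumes m: "3 \<le> m" "m \<le> n" "m - 1 \<le> n'" "n' \<le> n - 1" and s: "s \<in> sftl_S n m n'"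
  shows "sftl_E \<theta> n s (sftl_xi n n' s) \<le> ennreal (22 * real m ^ 2)"
proof -
  let ?\<Omega> = "PiM UNIV (\<lambda>_::nat. input_law)"
  let ?cost = "\<lambda>\<omega>. \<Sum>k. stopped_cost n (sftl_stopped n') (sftl_step_cost n) s \<omega> k"
  define region where "region = {x. sftl_ordered n x \<and> 1 \<le> x (n' + 2 - m)}"
  have n: "2 \<le> n" using m by simp
  have ord: "sftl_ordered n s" and s0: "s (Suc n') = 0" and top: "1 \<le> s (n' + 2 - m)"
    using s by (auto simp: sftl_S_def sftl_ordered_def)
  have total: "(\<integral>\<^sup>+\<omega>. ?cost \<omega> \<partial>?\<Omega>) \<le> sftl_lyapunov m n' s"
  proof (rule nn_integral_suminf_stopped_cost_le[OF prob_space_input_law sets_input_law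
        measurable_sftl_stopped measurable_sftl_step_cost[OF sets_input_law]])
    show "s \<in> region" using ord top by (simp add: region_def)
  next
    fix x assume x: "x \<in> region" "\<not> sftl_stopped n' x"
    show "AE a in input_law. sftl_move n x a \<in> region"
      using AE_input_admissible
      by eventually_elim (use x sftl_move_ordered_mono in \<open>auto simp: region_def intro: order_trans\<close>)
    show "(\<integral>\<^sup>+a. sftl_step_cost n x a + sftl_lyapunov m n' (sftl_move n x a) \<partial>input_law) \<le> sftl_lyapunov m n' x"
      using x by (intro sftl_lyapunov_drift[OF m]) (auto simp: region_def sftl_stopped_def)
  qed
  have "0 \<le> capped_sum {Suc (n' + 2 - m)..n'} s"
    unfolding capped_sum_def
    using sftl_ordered_le[OF ord, of _ "Suc n'"] s0 m by (intro sum_nonneg) auto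
  then have lyapunov_le: "sftl_lyapunov m n' s \<le> ennreal (22 * real m ^ 2)"
    by (auto simp: sftl_lyapunov_def power2_eq_square algebra_simps intro!: ennreal_leI)
  have adm: "AE \<omega> in ?\<Omega>. \<forall>k. sftl_input_admissible (\<omega> k)"
    unfolding AE_all_countable
    by (intro allI AE_PiM_component AE_input_admissible prob_space_input_law) auto
  have "(\<lambda>\<omega>. stopped_cost n (sftl_stopped n') (sftl_step_cost n) s \<omega> k) \<in> borel_measurable ?\<Omega>" for k
    using measurable_compose[OF measurable_Pair[OF measurable_const[of s] measurable_ident]
        measurable_stopped_cost[OF sets_input_law measurable_sftl_stopped measurable_sftl_step_cost[OF sets_input_law]]]
    by simp
  then have "?cost \<in> borel_measurable ?\<Omega>" by (rule borel_measurable_suminf_order)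
  then have "AE \<omega> in ?\<Omega>. ?cost \<omega> \<noteq> \<infinity>"
    by (rule nn_integral_noteq_infinite) (use total lyapunov_le in \<open>auto simp: top_unique\<close>)
  with adm have "AE \<omega> in ?\<Omega>. sftl_xi n n' s \<omega> \<le> ?cost \<omega>"
    by eventually_elim (rule sftl_xi_le_stopped_cost[OF ord n], auto)
  then have "sftl_E \<theta> n s (sftl_xi n n' s) \<le> (\<integral>\<^sup>+\<omega>. ?cost \<omega> \<partial>?\<Omega>)"
    unfolding sftl_E_def sftl_space_def by (rule nn_integral_mono_AE)
  also have "\<dots> \<le> ennreal (22 * real m ^ 2)" using total lyapunov_le by (rule order_trans)
  finally show ?thesis .
qed

end

theorem corollary6p3:
  fixes \<theta> :: "real measure"
  assumes "prob_space \<theta>" and "sets \<theta> = sets borel" and "emeasure \<theta> {x. x \<le> 0} = 0"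
  shows "\<exists>c>0. \<forall>n m. 3 \<le> n \<longrightarrow> 3 \<le> m \<longrightarrow> m \<le> n \<longrightarrow>
     (SUP n'\<in>{m - 1..n - 1}. SUP s\<in>sftl_S n m n'. sftl_E \<theta> n s (sftl_xi n n' s))
       \<le> ennreal (c * real m ^ 2)"
proof -
  interpret sftl_jump_law \<theta> using assms by (rule sftl_jump_law.intro)
  show ?thesis
  proof (intro exI[of _ 22] conjI allI impI)
    fix n m :: nat assume "3 \<le> n" "3 \<le> m" "m \<le> n"
    then show "(SUP n'\<in>{m - 1..n - 1}. SUP s\<in>sftl_S n m n'. sftl_E \<theta> n s (sftl_xi n n' s))
       \<le> ennreal (22 * real m ^ 2)"
      by (intro SUP_least sftl_E_xi_le) auto
  qed simp
qed

end
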